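(* Under the setting and assumptions in the context, fix a client $i$ and weights $\boldsymbol\alpha_i=(\alpha_{i1},\dots,\alpha_{im})\in\mathbb R^m$ with $\sum_{j=1}^m\alpha_{ij}=1$. Let $\hat{\mathbf g}_j$ be the empirical classifier of client $j$, $\mathbf g_j:=\mathbb E[\hat{\mathbf g}_j]$, and $\hat{\mathbf g}_i^*:=\sum_{j=1}^m\alpha_{ij}\hat{\mathbf g}_j$. Define the testing loss $R_i(\boldsymbol\alpha_i):=\mathbb E\big[\chi^2_i\big(P^{(i)}_{XY},P_XQ_{Y|X}(\hat{\mathbf g}^*_i)\big)\big]$ and $V_j:=n_j\,\mathbb E\big[\chi^2_i\big(P_XQ_{Y|X}(\hat{\mathbf g}_j),P_XQ_{Y|X}(\mathbf g_j)\big)\big]$. Then $$R_i(\boldsymbol\alpha_i)=\chi^2_i\Big(P_XQ_{Y|X}(\mathbf g_i),\sum_{j=1}^m\alpha_{ij}P_XQ_{Y|X}(\mathbf g_j)\Big)+\sum_{j=1}^m\frac{\alpha_{ij}^2}{n_j}V_j+\chi^2_i\big(P^{(i)}_{XY},P_XQ_{Y|X}(\mathbf g_i)\big),$$ which is a quadratic function of $\boldsymbol\alpha_i$; here $V_j$ does not depend on $\boldsymbol\alpha_i$.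
   Context: Let $\mathcal X$ be a finite input space and $\mathcal Y$ a finite label set with $|\mathcal Y|=K$. Let $\mathbf f:\mathcal X\to\mathbb R^d$ be a fixed feature map. For a function $\mathbf g:\mathcal Y\to\mathbb R^d$ define the model $Q_{Y|X}(y|x;\mathbf g)=\frac1K\big(1+\mathbf f(x)^\top\mathbf g(y)\big)$. There are $m$ clients; client $j$ has a true joint distribution $P^{(j)}_{XY}$ on $\mathcal X\times\mathcal Y$. Standing assumptions: (A1) $P^{(j)}_X=P_X$ for all $j$, with $P_X(x)>0$ for all $x$; (A2) $\mathbb E_{P_X}[\mathbf f(X)]=\mathbf 0$; (A3) $\Lambda:=\mathbb E_{P_X}[\mathbf f(X)\mathbf f(X)^\top]$ is invertible. Client $j$ holds $n_j$ i.i.d. samples from $P^{(j)}_{XY}$, samples of different clients being independent; $\hat P^{(j)}_{XY}$ is the resulting empirical distribution and $\mathbb E$ denotes expectation over sampling. The $\chi^2_i$-distance is $\chi^2_i(P,Q)=\sum_{x,y}\frac{(P(x,y)-Q(x,y))^2}{P^{(i)}_X(x)}$ (applied to arbitrary real functions on $\mathcal X\times\mathcal Y$), and $P_XQ_{Y|X}(\mathbf g)$ denotes $(x,y)\mapsto P_X(x)Q_{Y|X}(y|x;\mathbf g)$. The empirical classifier of client $j$ is $\hat{\mathbf g}_j:=\arg\min_{\mathbf g:\mathcal Y\to\mathbb R^d}\chi^2_j\big(\hat P^{(j)}_{XY},P_XQ_{Y|X}(\mathbf g)\big)$ (which exists and is unique under (A1)-(A3)). *)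

theory Defs
  imports "HOL-Analysis.Analysis" "HOL-Probability.Probability"
begin

definition chi2 :: "('x::finite \<Rightarrow> real) \<Rightarrow> ('x \<times> 'y::finite \<Rightarrow> real) \<Rightarrow> ('x \<times> 'y \<Rightarrow> real) \<Rightarrow> real" where
  "chi2 PX P Q = (\<Sum>x\<in>UNIV. \<Sum>y\<in>UNIV. (P (x, y) - Q (x, y))^2 / PX x)"

definition QPX :: "('x::finite \<Rightarrow> real) \<Rightarrow> ('x \<Rightarrow> real^'d::finite) \<Rightarrow> ('y::finite \<Rightarrow> real^'d) \<Rightarrow> ('x \<times> 'y \<Rightarrow> real)" where
  "QPX PX f g = (\<lambda>(x, y). PX x * (1 + f x \<bullet> g y) / real CARD('y))"

definition emp_dist :: "nat \<Rightarrow> (nat \<Rightarrow> 'a) \<Rightarrow> ('a \<Rightarrow> real)" where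
  "emp_dist n s = (\<lambda>a. real (card {k\<in>{..<n}. s k = a}) / real n)"

definition emp_classifier :: "('x::finite \<Rightarrow> real) \<Rightarrow> ('x \<Rightarrow> real^'d::finite) \<Rightarrow> ('x \<times> 'y::finite \<Rightarrow> real) \<Rightarrow> ('y \<Rightarrow> real^'d)" where
  "emp_classifier PX f Phat = (THE g. \<forall>g'. chi2 PX Phat (QPX PX f g) \<le> chi2 PX Phat (QPX PX f g'))"

text \<open>Joint sampling distribution: omega j k is the k-th sample of client j,
  all samples independent, client j's samples i.i.d. from P j.\<close>
definition sample_pmf :: "nat \<Rightarrow> (nat \<Rightarrow> nat) \<Rightarrow> (nat \<Rightarrow> ('x \<times> 'y) pmf) \<Rightarrow> (nat \<Rightarrow> nat \<Rightarrow> 'x \<times> 'y) pmf" where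
  "sample_pmf m n P = Pi_pmf {..<m} (\<lambda>_. undefined) (\<lambda>j. Pi_pmf {..<n j} undefined (\<lambda>_. P j))"

end

theory Submission
  imports Defs
begin

text \<open>
  The \<open>\<chi>\<^sup>2\<^sub>i\<close>-distance is the squared norm of the inner product \<open>\<langle>a, b\<rangle> = \<Sum> a b / P_X\<close>,
  and the model joints \<open>P_X Q(g)\<close> form an affine subspace whose directions are the functions
  \<open>P_X(x) f(x)\<^sup>T v(y)\<close>. The empirical classifier is therefore the orthogonal projection of the
  empirical distribution, which is the linear map \<open>g(y) = K \<Lambda>\<^sup>-\<^sup>1 \<Sum>\<^sub>x P(x, y) f(x)\<close>.
  Unbiasedness of the empirical distributions makes \<open>g_i\<close> the projection of \<open>P\<^sup>(\<^sup>i\<^sup>)\<close>, so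
  Pythagoras splits the risk into \<open>\<chi>\<^sup>2\<^sub>i(P\<^sup>(\<^sup>i\<^sup>), P_X Q(g_i))\<close> plus the expected distance from
  \<open>P_X Q(g_i)\<close> to \<open>P_X Q(\<Sum> \<alpha>_j ghat_j) = \<Sum> \<alpha>_j P_X Q(ghat_j)\<close> (the model is affine and the weights
  sum to one). The errors \<open>P_X Q(ghat_j) - P_X Q(g_j)\<close> are centred and, the clients being
  independent, uncorrelated; hence that distance is a bias term plus \<open>\<Sum> \<alpha>_j\<^sup>2 V_j / n_j\<close>.
\<close>

lemma chi2_split:
  "chi2 PX u w = chi2 PX u v + chi2 PX v w
     + 2 * (\<Sum>x\<in>UNIV. \<Sum>y\<in>UNIV. (u (x, y) - v (x, y)) * (v (x, y) - w (x, y)) / PX x)"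
proof -
  have "(u (x, y) - w (x, y))^2 / PX x = (u (x, y) - v (x, y))^2 / PX x + (v (x, y) - w (x, y))^2 / PX x
      + 2 * ((u (x, y) - v (x, y)) * (v (x, y) - w (x, y)) / PX x)" for x y
    by (simp add: power2_eq_square add_divide_distrib[symmetric]) (simp add: algebra_simps)
  then show ?thesis
    unfolding chi2_def sum_distrib_left by (simp add: sum.distrib)
qed

lemma chi2_nonneg: "(\<And>x. PX x > 0) \<Longrightarrow> 0 \<le> chi2 PX u v"
  unfolding chi2_def by (intro sum_nonneg) (simp add: less_imp_le)

lemma chi2_eq_0_iff:
  assumes "\<And>x. PX x > 0"
  shows "chi2 PX u v = 0 \<longleftrightarrow> u = v"
proof
  assume "chi2 PX u v = 0"
  then have "\<forall>x. \<forall>y. (u (x, y) - v (x, y))^2 / PX x = 0"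
    unfolding chi2_def using assms
    by (simp add: sum_nonneg_eq_0_iff sum_nonneg less_imp_le)
  then have "u (x, y) = v (x, y)" for x y
    using assms[of x] by (metis divide_eq_0_iff less_irrefl power_eq_0_iff right_minus_eq)
  then show "u = v" by auto
qed (simp add: chi2_def)

definition feature_cov :: "('x::finite \<Rightarrow> real) \<Rightarrow> ('x \<Rightarrow> real^'d::finite) \<Rightarrow> real^'d^'d" where
  "feature_cov PX f = (\<chi> k l. \<Sum>x\<in>UNIV. PX x * (f x $ k) * (f x $ l))"

lemma feature_cov_mult_vec: "feature_cov PX f *v v = (\<Sum>x\<in>UNIV. (PX x * (f x \<bullet> v)) *\<^sub>R f x)"
proof (subst vec_eq_iff, intro allI)
  fix k
  have "(feature_cov PX f *v v) $ k = (\<Sum>l\<in>UNIV. \<Sum>x\<in>UNIV. PX x * f x $ k * f x $ l * v $ l)"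
    unfolding feature_cov_def matrix_vector_mult_def by (simp add: sum_distrib_right)
  also have "\<dots> = (\<Sum>x\<in>UNIV. \<Sum>l\<in>UNIV. PX x * f x $ k * f x $ l * v $ l)"
    by (rule sum.swap)
  also have "\<dots> = (\<Sum>x\<in>UNIV. (PX x * (f x \<bullet> v)) *\<^sub>R f x) $ k"
    unfolding sum_component inner_vec_def
    by (intro sum.cong refl) (simp add: sum_distrib_left sum_distrib_right mult_ac)
  finally show "(feature_cov PX f *v v) $ k = (\<Sum>x\<in>UNIV. (PX x * (f x \<bullet> v)) *\<^sub>R f x) $ k" .
qed

lemma inner_feature_cov: "u \<bullet> (feature_cov PX f *v v) = (\<Sum>x\<in>UNIV. PX x * (f x \<bullet> u) * (f x \<bullet> v))"
  unfolding feature_cov_mult_vec by (simp add: inner_sum_right mult_ac inner_commute)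

lemma matrix_mul_matrix_inv: "invertible A \<Longrightarrow> A ** matrix_inv A = mat 1"
  unfolding invertible_def matrix_inv_def by (rule someI2_ex) auto

lemma QPX_diff:
  fixes g g' :: "'y::finite \<Rightarrow> real^'d::finite"
  shows "QPX PX f g (x, y) - QPX PX f g' (x, y) = PX x * (f x \<bullet> (g y - g' y)) / real CARD('y)"
  unfolding QPX_def by (simp add: inner_diff_right diff_divide_distrib[symmetric] algebra_simps)

lemma QPX_inj:
  fixes g g' :: "'y::finite \<Rightarrow> real^'d::finite"
  assumes PX_pos: "\<And>x. PX x > 0" and invertible: "invertible (feature_cov PX f)"
    and eq: "QPX PX f g = QPX PX f g'"
  shows "g = g'"
proof
  fix y
  have "f x \<bullet> (g y - g' y) = 0" for x
    using arg_cong[OF eq, of "\<lambda>q. q (x, y) - QPX PX f g' (x, y)"] PX_pos[of x]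
    by (simp add: QPX_diff)
  then have "feature_cov PX f *v (g y - g' y) = feature_cov PX f *v 0"
    by (simp add: feature_cov_mult_vec)
  then have "g y - g' y = 0"
    using inj_matrix_vector_mult[OF invertible] by (metis injD)
  then show "g y = g' y" by simp
qed

lemma QPX_affine_combination:
  fixes g :: "'j \<Rightarrow> 'y::finite \<Rightarrow> real^'d::finite"
  assumes "(\<Sum>j\<in>J. \<alpha> j) = 1"
  shows "QPX PX f (\<lambda>y. \<Sum>j\<in>J. \<alpha> j *\<^sub>R g j y) (x, y) = (\<Sum>j\<in>J. \<alpha> j * QPX PX f (g j) (x, y))"
proof -
  have "(\<Sum>j\<in>J. \<alpha> j * QPX PX f (g j) (x, y))
      = PX x / real CARD('y) * (\<Sum>j\<in>J. \<alpha> j + \<alpha> j * (f x \<bullet> g j y))"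
    unfolding QPX_def sum_distrib_left by (intro sum.cong refl) (simp add: field_simps)
  then show ?thesis
    unfolding QPX_def using assms by (simp add: sum.distrib inner_sum_right)
qed

lemma expectation_QPX:
  assumes "finite (set_pmf M)"
  shows "measure_pmf.expectation M (\<lambda>\<omega>. QPX PX f (G \<omega>) (x, y))
       = QPX PX f (\<lambda>y. measure_pmf.expectation M (\<lambda>\<omega>. G \<omega> y)) (x, y)"
  unfolding QPX_def by (simp add: integrable_measure_pmf_finite[OF assms])

definition lsq_classifier ::
  "('x::finite \<Rightarrow> real) \<Rightarrow> ('x \<Rightarrow> real^'d::finite) \<Rightarrow> ('x \<times> 'y::finite \<Rightarrow> real) \<Rightarrow> 'y \<Rightarrow> real^'d" where
  "lsq_classifier PX f h y =
     real CARD('y) *\<^sub>R (matrix_inv (feature_cov PX f) *v (\<Sum>x\<in>UNIV. h (x, y) *\<^sub>R f x))"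

lemma lsq_classifier_eq_sum:
  fixes h :: "'x::finite \<times> 'y::finite \<Rightarrow> real"
  shows "lsq_classifier PX f h y
     = (\<Sum>x\<in>UNIV. h (x, y) *\<^sub>R (real CARD('y) *\<^sub>R (matrix_inv (feature_cov PX f) *v f x)))"
  unfolding lsq_classifier_def
  by (simp add: linear_sum[OF matrix_vector_mul_linear] matrix_vector_mult_scaleR scaleR_sum_right mult.commute)

lemma expectation_lsq_classifier:
  assumes "finite (set_pmf M)"
  shows "measure_pmf.expectation M (\<lambda>\<omega>. lsq_classifier PX f (H \<omega>) y)
       = lsq_classifier PX f (\<lambda>z. measure_pmf.expectation M (\<lambda>\<omega>. H \<omega> z)) y"
  unfolding lsq_classifier_eq_sum by (simp add: integrable_measure_pmf_finite[OF assms])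

text \<open>The normal equations: the sum is the \<open>\<chi>\<^sup>2\<close>-inner product of the residual with the model
  direction \<open>P_X(x) f(x)\<^sup>T v(y)\<close>, the weight \<open>P_X\<close> having cancelled.\<close>

lemma lsq_residual_orthogonal:
  fixes h :: "'x::finite \<times> 'y::finite \<Rightarrow> real" and f :: "'x \<Rightarrow> real^'d::finite"
  assumes centered: "(\<Sum>x\<in>UNIV. PX x *\<^sub>R f x) = 0"
    and invertible: "invertible (feature_cov PX f)"
  shows "(\<Sum>x\<in>UNIV. \<Sum>y\<in>UNIV. (h (x, y) - QPX PX f (lsq_classifier PX f h) (x, y)) * (f x \<bullet> v y)) = 0"
proof -
  define \<Lambda> where "\<Lambda> = feature_cov PX f"
  define s where "s y = (\<Sum>x\<in>UNIV. h (x, y) *\<^sub>R f x)" for y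
  have QPX_lsq: "QPX PX f (lsq_classifier PX f h) (x, y)
      = PX x / real CARD('y) + PX x * (f x \<bullet> (matrix_inv \<Lambda> *v s y))" for x y
    unfolding QPX_def lsq_classifier_def \<Lambda>_def s_def by (simp add: field_simps)
  have data_part: "(\<Sum>x\<in>UNIV. \<Sum>y\<in>UNIV. h (x, y) * (f x \<bullet> v y)) = (\<Sum>y\<in>UNIV. s y \<bullet> v y)"
    unfolding s_def inner_sum_left by (subst sum.swap) simp
  have constant_part: "(\<Sum>x\<in>UNIV. \<Sum>y\<in>UNIV. PX x / real CARD('y) * (f x \<bullet> v y)) = 0"
  proof -
    have "(\<Sum>x\<in>UNIV. \<Sum>y\<in>UNIV. PX x / real CARD('y) * (f x \<bullet> v y))
        = (\<Sum>y\<in>UNIV. (\<Sum>x\<in>UNIV. PX x *\<^sub>R f x) \<bullet> v y / real CARD('y))"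
      by (subst sum.swap) (simp add: inner_sum_left sum_divide_distrib sum_distrib_right)
    then show ?thesis using centered by simp
  qed
  have model_part: "(\<Sum>x\<in>UNIV. \<Sum>y\<in>UNIV. PX x * (f x \<bullet> (matrix_inv \<Lambda> *v s y)) * (f x \<bullet> v y))
      = (\<Sum>y\<in>UNIV. s y \<bullet> v y)"
  proof -
    have "v y \<bullet> (\<Lambda> *v (matrix_inv \<Lambda> *v s y)) = s y \<bullet> v y" for y
      using matrix_mul_matrix_inv[OF invertible] by (simp add: \<Lambda>_def matrix_vector_mul_assoc inner_commute)
    then show ?thesis
      unfolding \<Lambda>_def inner_feature_cov by (subst sum.swap) (simp add: mult_ac)
  qed
  have "(\<Sum>x\<in>UNIV. \<Sum>y\<in>UNIV. (h (x, y) - QPX PX f (lsq_classifier PX f h) (x, y)) * (f x \<bullet> v y))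
      = (\<Sum>x\<in>UNIV. \<Sum>y\<in>UNIV. h (x, y) * (f x \<bullet> v y))
        - (\<Sum>x\<in>UNIV. \<Sum>y\<in>UNIV. PX x / real CARD('y) * (f x \<bullet> v y))
        - (\<Sum>x\<in>UNIV. \<Sum>y\<in>UNIV. PX x * (f x \<bullet> (matrix_inv \<Lambda> *v s y)) * (f x \<bullet> v y))"
    unfolding QPX_lsq sum_subtractf[symmetric] by (intro sum.cong refl) (simp add: algebra_simps)
  then show ?thesis
    unfolding data_part constant_part model_part by simp
qed

lemma chi2_QPX_pythagoras:
  fixes h :: "'x::finite \<times> 'y::finite \<Rightarrow> real" and f :: "'x \<Rightarrow> real^'d::finite"
  assumes PX_pos: "\<And>x. PX x > 0" and centered: "(\<Sum>x\<in>UNIV. PX x *\<^sub>R f x) = 0"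
    and invertible: "invertible (feature_cov PX f)"
  shows "chi2 PX h (QPX PX f g) = chi2 PX h (QPX PX f (lsq_classifier PX f h))
           + chi2 PX (QPX PX f (lsq_classifier PX f h)) (QPX PX f g)"
proof -
  let ?q = "QPX PX f (lsq_classifier PX f h)"
  let ?w = "\<lambda>y. lsq_classifier PX f h y - g y"
  have "(\<Sum>x\<in>UNIV. \<Sum>y\<in>UNIV. (h (x, y) - ?q (x, y)) * (?q (x, y) - QPX PX f g (x, y)) / PX x)
      = (\<Sum>x\<in>UNIV. \<Sum>y\<in>UNIV. (h (x, y) - ?q (x, y)) * (f x \<bullet> ?w y)) / real CARD('y)"
    unfolding QPX_diff sum_divide_distrib using PX_pos
    by (intro sum.cong refl) (simp add: less_imp_neq[symmetric])
  also have "\<dots> = 0"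
    using lsq_residual_orthogonal[OF centered invertible, of h ?w] by simp
  finally show ?thesis
    by (subst chi2_split[where v = ?q]) simp
qed

lemma chi2_QPX_affine_pythagoras:
  fixes h :: "'x::finite \<times> 'y::finite \<Rightarrow> real" and f :: "'x \<Rightarrow> real^'d::finite"
  assumes PX_pos: "\<And>x. PX x > 0" and centered: "(\<Sum>x\<in>UNIV. PX x *\<^sub>R f x) = 0"
    and invertible: "invertible (feature_cov PX f)" and weights: "(\<Sum>j\<in>J. \<alpha> j) = 1"
  shows "chi2 PX h (QPX PX f (\<lambda>y. \<Sum>j\<in>J. \<alpha> j *\<^sub>R G j y))
       = chi2 PX h (QPX PX f (lsq_classifier PX f h))
         + chi2 PX (QPX PX f (lsq_classifier PX f h)) (\<lambda>z. \<Sum>j\<in>J. \<alpha> j * QPX PX f (G j) z)"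
proof -
  have "QPX PX f (\<lambda>y. \<Sum>j\<in>J. \<alpha> j *\<^sub>R G j y) = (\<lambda>z. \<Sum>j\<in>J. \<alpha> j * QPX PX f (G j) z)"
    using QPX_affine_combination[OF weights] by fastforce
  then show ?thesis
    by (subst chi2_QPX_pythagoras[OF PX_pos centered invertible]) (simp only:)
qed

lemma emp_classifier_eq_lsq_classifier:
  fixes h :: "'x::finite \<times> 'y::finite \<Rightarrow> real" and f :: "'x \<Rightarrow> real^'d::finite"
  assumes PX_pos: "\<And>x. PX x > 0" and centered: "(\<Sum>x\<in>UNIV. PX x *\<^sub>R f x) = 0"
    and invertible: "invertible (feature_cov PX f)"
  shows "emp_classifier PX f h = lsq_classifier PX f h"
  unfolding emp_classifier_def
proof (rule the_equality)
  let ?q = "QPX PX f (lsq_classifier PX f h)"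
  note pythagoras = chi2_QPX_pythagoras[OF PX_pos centered invertible, of h]
  show "\<forall>g. chi2 PX h ?q \<le> chi2 PX h (QPX PX f g)"
  proof
    fix g
    show "chi2 PX h ?q \<le> chi2 PX h (QPX PX f g)"
      using pythagoras[of g] chi2_nonneg[of PX ?q "QPX PX f g", OF PX_pos] by linarith
  qed
  fix g
  assume "\<forall>g'. chi2 PX h (QPX PX f g) \<le> chi2 PX h (QPX PX f g')"
  then have "chi2 PX h (QPX PX f g) \<le> chi2 PX h ?q" by blast
  then have "chi2 PX ?q (QPX PX f g) = 0"
    using pythagoras[of g] chi2_nonneg[of PX ?q "QPX PX f g", OF PX_pos] by linarith
  then have "?q = QPX PX f g"
    using chi2_eq_0_iff[of PX, OF PX_pos] by blast
  then show "g = lsq_classifier PX f h"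
    using QPX_inj[OF PX_pos invertible] by metis
qed

lemma finite_set_Pi_pmf:
  assumes "finite A" "\<And>i. i \<in> A \<Longrightarrow> finite (set_pmf (p i))"
  shows "finite (set_pmf (Pi_pmf A d p))"
  using assms by (subst set_Pi_pmf) (auto intro!: finite_PiE_dflt)

lemma finite_set_sample_pmf:
  "finite (set_pmf (sample_pmf m n (P :: nat \<Rightarrow> ('a::finite \<times> 'b::finite) pmf)))"
  unfolding sample_pmf_def by (intro finite_set_Pi_pmf) auto

lemma map_sample_pmf_component:
  "j < m \<Longrightarrow> map_pmf (\<lambda>\<omega>. \<omega> j) (sample_pmf m n P) = Pi_pmf {..<n j} undefined (\<lambda>_. P j)"
  unfolding sample_pmf_def by (subst Pi_pmf_component) auto

lemma expectation_emp_dist: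
  assumes "N > 0" "finite (set_pmf p)"
  shows "measure_pmf.expectation (Pi_pmf {..<N} d (\<lambda>_. p)) (\<lambda>s. emp_dist N s a) = pmf p a"
proof -
  let ?S = "Pi_pmf {..<N} d (\<lambda>_. p)"
  have integrable: "integrable ?S F" for F :: "_ \<Rightarrow> real"
    using assms(2) by (intro integrable_measure_pmf_finite finite_set_Pi_pmf) auto
  have component: "measure_pmf.expectation ?S (\<lambda>s. of_bool (s k = a)) = pmf p a" if "k < N" for k
  proof -
    have "measure_pmf.expectation ?S (\<lambda>s. of_bool (s k = a))
        = measure_pmf.expectation (map_pmf (\<lambda>s. s k) ?S) (\<lambda>w. indicator {a} w :: real)"
      unfolding integral_map_pmf by (simp add: indicator_def)
    also have "\<dots> = pmf p a"
      using that by (simp add: Pi_pmf_component measure_pmf_single)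
    finally show ?thesis .
  qed
  have "emp_dist N s a = (\<Sum>k<N. of_bool (s k = a)) / real N" for s
    unfolding emp_dist_def by (simp add: Int_def conj_commute)
  then have "measure_pmf.expectation ?S (\<lambda>s. emp_dist N s a)
      = (\<Sum>k<N. measure_pmf.expectation ?S (\<lambda>s. of_bool (s k = a))) / real N"
    by (simp only: integral_divide_zero Bochner_Integration.integral_sum[OF integrable])
  also have "\<dots> = pmf p a"
    using assms(1) by (simp add: component)
  finally show ?thesis .
qed

lemma expectation_emp_dist_sample_pmf:
  fixes P :: "nat \<Rightarrow> ('a::finite \<times> 'b::finite) pmf"
  assumes "j < m" "n j > 0"
  shows "measure_pmf.expectation (sample_pmf m n P) (\<lambda>\<omega>. emp_dist (n j) (\<omega> j) z) = pmf (P j) z"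
  using expectation_emp_dist[OF assms(2), of "P j" undefined z] assms(1)
  by (simp flip: map_sample_pmf_component)

lemma map_Pi_pmf_pair_components:
  assumes "finite A" "j \<in> A" "k \<in> A" "j \<noteq> k"
  shows "map_pmf (\<lambda>\<omega>. (\<omega> j, \<omega> k)) (Pi_pmf A d p) = pair_pmf (p j) (p k)"
proof -
  define B where "B = A - {j, k}"
  have A: "A = insert j (insert k B)" "finite B" "j \<notin> insert k B" "k \<notin> B"
    using assms by (auto simp: B_def)
  have "map_pmf (\<lambda>\<omega>. (\<omega> j, \<omega> k)) (Pi_pmf A d p)
      = map_pmf (\<lambda>x. (fst x, fst (snd x))) (pair_pmf (p j) (pair_pmf (p k) (Pi_pmf B d p)))"
    unfolding A(1) using A assms(4)
    by (simp add: Pi_pmf_insert pmf.map_comp o_def pair_map_pmf2 case_prod_beta)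
  also have "\<dots> = pair_pmf (p j) (p k)"
    using map_pair[of id fst "p j" "pair_pmf (p k) (Pi_pmf B d p)"]
    by (simp add: map_fst_pair_pmf case_prod_beta')
  finally show ?thesis .
qed

lemma expectation_pair_pmf_mult:
  fixes F G :: "_ \<Rightarrow> real"
  assumes "finite (set_pmf A)" "finite (set_pmf B)"
  shows "measure_pmf.expectation (pair_pmf A B) (\<lambda>(a, b). F a * G b)
       = measure_pmf.expectation A F * measure_pmf.expectation B G"
proof -
  have "measure_pmf.expectation (pair_pmf A B) (\<lambda>(a, b). F a * G b)
      = (\<Sum>z\<in>set_pmf A \<times> set_pmf B. (case z of (a, b) \<Rightarrow> F a * G b) * pmf (pair_pmf A B) z)"
    using assms by (intro integral_measure_pmf_real) auto
  also have "\<dots> = (\<Sum>a\<in>set_pmf A. \<Sum>b\<in>set_pmf B. (F a * pmf A a) * (G b * pmf B b))"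
    by (simp add: sum.cartesian_product, intro sum.cong refl) (auto simp: pmf_pair mult_ac)
  also have "\<dots> = (\<Sum>a\<in>set_pmf A. F a * pmf A a) * (\<Sum>b\<in>set_pmf B. G b * pmf B b)"
    by (simp add: sum_product)
  also have "\<dots> = measure_pmf.expectation A F * measure_pmf.expectation B G"
    using assms by (simp add: integral_measure_pmf_real)
  finally show ?thesis .
qed

lemma expectation_Pi_pmf_mult:
  fixes F G :: "_ \<Rightarrow> real"
  assumes "finite A" "j \<in> A" "k \<in> A" "j \<noteq> k"
    and "finite (set_pmf (p j))" "finite (set_pmf (p k))"
  shows "measure_pmf.expectation (Pi_pmf A d p) (\<lambda>\<omega>. F (\<omega> j) * G (\<omega> k))
       = measure_pmf.expectation (p j) F * measure_pmf.expectation (p k) G"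
proof -
  have "measure_pmf.expectation (Pi_pmf A d p) (\<lambda>\<omega>. F (\<omega> j) * G (\<omega> k))
      = measure_pmf.expectation (map_pmf (\<lambda>\<omega>. (\<omega> j, \<omega> k)) (Pi_pmf A d p)) (\<lambda>(a, b). F a * G b)"
    by simp
  then show ?thesis
    using assms by (simp add: map_Pi_pmf_pair_components expectation_pair_pmf_mult)
qed

lemma expectation_sample_pmf_mult:
  fixes P :: "nat \<Rightarrow> ('a::finite \<times> 'b::finite) pmf" and F G :: "_ \<Rightarrow> real"
  assumes "j < m" "k < m" "j \<noteq> k"
  shows "measure_pmf.expectation (sample_pmf m n P) (\<lambda>\<omega>. F (\<omega> j) * G (\<omega> k))
       = measure_pmf.expectation (sample_pmf m n P) (\<lambda>\<omega>. F (\<omega> j))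
         * measure_pmf.expectation (sample_pmf m n P) (\<lambda>\<omega>. G (\<omega> k))"
proof -
  have "finite (set_pmf (Pi_pmf {..<n l} undefined (\<lambda>_. P l)))" for l
    by (intro finite_set_Pi_pmf) auto
  moreover have "measure_pmf.expectation (sample_pmf m n P) (\<lambda>\<omega>. H (\<omega> l))
      = measure_pmf.expectation (Pi_pmf {..<n l} undefined (\<lambda>_. P l)) H" if "l < m" for l and H :: "_ \<Rightarrow> real"
    using that by (simp flip: map_sample_pmf_component)
  ultimately show ?thesis
    using assms unfolding sample_pmf_def by (simp add: expectation_Pi_pmf_mult)
qed

lemma expectation_sample_pmf_centered_mult:
  fixes P :: "nat \<Rightarrow> ('a::finite \<times> 'b::finite) pmf" and F G :: "_ \<Rightarrow> real"
  assumes "j < m" "k < m" "j \<noteq> k"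
    and "measure_pmf.expectation (sample_pmf m n P) (\<lambda>\<omega>. F (\<omega> j)) = a"
    and "measure_pmf.expectation (sample_pmf m n P) (\<lambda>\<omega>. G (\<omega> k)) = b"
  shows "measure_pmf.expectation (sample_pmf m n P) (\<lambda>\<omega>. (F (\<omega> j) - a) * (G (\<omega> k) - b)) = 0"
  using expectation_sample_pmf_mult[OF assms(1-3), of n P "\<lambda>w. F w - a" "\<lambda>w. G w - b"] assms(4,5)
  by (simp add: integrable_measure_pmf_finite[OF finite_set_sample_pmf])

lemma expectation_square_sum_centered:
  fixes X :: "'j \<Rightarrow> 'a \<Rightarrow> real"
  assumes fin: "finite (set_pmf M)" and "finite J"
    and mean: "\<And>j. j \<in> J \<Longrightarrow> measure_pmf.expectation M (X j) = c j"
    and uncorrelated: "\<And>j k. j \<in> J \<Longrightarrow> k \<in> J \<Longrightarrow> j \<noteq> k \<Longrightarrow>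
           measure_pmf.expectation M (\<lambda>\<omega>. (X j \<omega> - c j) * (X k \<omega> - c k)) = 0"
  shows "measure_pmf.expectation M (\<lambda>\<omega>. (b - (\<Sum>j\<in>J. \<alpha> j * X j \<omega>))\<^sup>2)
       = (b - (\<Sum>j\<in>J. \<alpha> j * c j))\<^sup>2 + (\<Sum>j\<in>J. (\<alpha> j)\<^sup>2 * measure_pmf.expectation M (\<lambda>\<omega>. (X j \<omega> - c j)\<^sup>2))"
proof -
  define B where "B = b - (\<Sum>j\<in>J. \<alpha> j * c j)"
  define D where "D j = (\<lambda>\<omega>. X j \<omega> - c j)" for j
  note integrable = integrable_measure_pmf_finite[OF fin]
  have centered: "measure_pmf.expectation M (D j) = 0" if "j \<in> J" for j
    using mean[OF that] by (simp add: D_def integrable)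
  have cross: "(\<Sum>k\<in>J. \<alpha> j * \<alpha> k * measure_pmf.expectation M (\<lambda>\<omega>. D j \<omega> * D k \<omega>))
      = (\<alpha> j)\<^sup>2 * measure_pmf.expectation M (\<lambda>\<omega>. (D j \<omega>)\<^sup>2)" if "j \<in> J" for j
  proof -
    have "(\<Sum>k\<in>J. \<alpha> j * \<alpha> k * measure_pmf.expectation M (\<lambda>\<omega>. D j \<omega> * D k \<omega>))
        = (\<Sum>k\<in>J. if k = j then \<alpha> j * \<alpha> j * measure_pmf.expectation M (\<lambda>\<omega>. D j \<omega> * D j \<omega>) else 0)"
      using that uncorrelated by (intro sum.cong refl) (auto simp: D_def)
    then show ?thesis
      using that \<open>finite J\<close> by (simp add: power2_eq_square)
  qed
  have "(b - (\<Sum>j\<in>J. \<alpha> j * X j \<omega>))\<^sup>2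
      = B\<^sup>2 - 2 * B * (\<Sum>j\<in>J. \<alpha> j * D j \<omega>) + (\<Sum>j\<in>J. \<Sum>k\<in>J. \<alpha> j * \<alpha> k * (D j \<omega> * D k \<omega>))" for \<omega>
  proof -
    have "b - (\<Sum>j\<in>J. \<alpha> j * X j \<omega>) = B - (\<Sum>j\<in>J. \<alpha> j * D j \<omega>)"
      by (simp add: B_def D_def right_diff_distrib sum_subtractf)
    then show ?thesis
      unfolding power2_eq_square by (simp only:) (simp add: sum_product algebra_simps)
  qed
  then have "measure_pmf.expectation M (\<lambda>\<omega>. (b - (\<Sum>j\<in>J. \<alpha> j * X j \<omega>))\<^sup>2)
      = B\<^sup>2 - 2 * B * (\<Sum>j\<in>J. \<alpha> j * measure_pmf.expectation M (D j))
        + (\<Sum>j\<in>J. \<Sum>k\<in>J. \<alpha> j * \<alpha> k * measure_pmf.expectation M (\<lambda>\<omega>. D j \<omega> * D k \<omega>))"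
    by (simp add: integrable Bochner_Integration.integral_diff)
  also have "\<dots> = B\<^sup>2 + (\<Sum>j\<in>J. (\<alpha> j)\<^sup>2 * measure_pmf.expectation M (\<lambda>\<omega>. (D j \<omega>)\<^sup>2))"
    by (simp add: centered cross)
  finally show ?thesis
    by (simp add: B_def D_def)
qed

lemma expectation_chi2_sum_centered:
  fixes Y :: "'j \<Rightarrow> 'a \<Rightarrow> 'x::finite \<times> 'y::finite \<Rightarrow> real"
  assumes fin: "finite (set_pmf M)" and J: "finite J"
    and mean: "\<And>j z. j \<in> J \<Longrightarrow> measure_pmf.expectation M (\<lambda>\<omega>. Y j \<omega> z) = c j z"
    and uncorrelated: "\<And>j k z. j \<in> J \<Longrightarrow> k \<in> J \<Longrightarrow> j \<noteq> k \<Longrightarrow>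
           measure_pmf.expectation M (\<lambda>\<omega>. (Y j \<omega> z - c j z) * (Y k \<omega> z - c k z)) = 0"
  shows "measure_pmf.expectation M (\<lambda>\<omega>. chi2 PX u (\<lambda>z. \<Sum>j\<in>J. \<alpha> j * Y j \<omega> z))
       = chi2 PX u (\<lambda>z. \<Sum>j\<in>J. \<alpha> j * c j z)
         + (\<Sum>j\<in>J. (\<alpha> j)\<^sup>2 * measure_pmf.expectation M (\<lambda>\<omega>. chi2 PX (Y j \<omega>) (c j)))"
proof -
  note integrable = integrable_measure_pmf_finite[OF fin]
  let ?E = "\<lambda>j z. measure_pmf.expectation M (\<lambda>\<omega>. (Y j \<omega> z - c j z)\<^sup>2)"
  have pointwise: "measure_pmf.expectation M (\<lambda>\<omega>. (u z - (\<Sum>j\<in>J. \<alpha> j * Y j \<omega> z))\<^sup>2)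
      = (u z - (\<Sum>j\<in>J. \<alpha> j * c j z))\<^sup>2 + (\<Sum>j\<in>J. (\<alpha> j)\<^sup>2 * ?E j z)" for z
    using expectation_square_sum_centered[OF fin J, of "\<lambda>j \<omega>. Y j \<omega> z" "\<lambda>j. c j z"] mean uncorrelated
    by simp
  have variance: "measure_pmf.expectation M (\<lambda>\<omega>. chi2 PX (Y j \<omega>) (c j))
      = (\<Sum>x\<in>UNIV. \<Sum>y\<in>UNIV. ?E j (x, y) / PX x)" for j
    unfolding chi2_def by (simp add: integrable)
  have "measure_pmf.expectation M (\<lambda>\<omega>. chi2 PX u (\<lambda>z. \<Sum>j\<in>J. \<alpha> j * Y j \<omega> z))
      = (\<Sum>x\<in>UNIV. \<Sum>y\<in>UNIV. ((u (x, y) - (\<Sum>j\<in>J. \<alpha> j * c j (x, y)))\<^sup>2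
           + (\<Sum>j\<in>J. (\<alpha> j)\<^sup>2 * ?E j (x, y))) / PX x)"
    unfolding chi2_def by (simp add: integrable pointwise)
  also have "\<dots> = chi2 PX u (\<lambda>z. \<Sum>j\<in>J. \<alpha> j * c j z)
      + (\<Sum>j\<in>J. (\<alpha> j)\<^sup>2 * measure_pmf.expectation M (\<lambda>\<omega>. chi2 PX (Y j \<omega>) (c j)))"
    unfolding variance unfolding chi2_def add_divide_distrib sum.distrib sum_distrib_left sum_divide_distrib
    by (simp add: sum.swap[of _ "UNIV :: 'y set" J] sum.swap[of _ "UNIV :: 'x set" J] mult_ac)
  finally show ?thesis .
qed

theorem theorem1:
  fixes PX :: "'x::finite \<Rightarrow> real"
    and f :: "'x \<Rightarrow> real^'d::finite"
    and P :: "nat \<Rightarrow> ('x \<times> 'y::finite) pmf"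
    and m :: nat and n :: "nat \<Rightarrow> nat" and i :: nat
    and \<alpha> :: "nat \<Rightarrow> real"
  assumes A1: "\<And>j x. j < m \<Longrightarrow> (\<Sum>y\<in>UNIV. pmf (P j) (x, y)) = PX x"
    and PX_pos: "\<And>x. PX x > 0"
    and A2: "(\<Sum>x\<in>UNIV. PX x *\<^sub>R f x) = 0"
    and A3: "invertible (\<chi> k l. \<Sum>x\<in>UNIV. PX x * (f x $ k) * (f x $ l))"
    and n_pos: "\<And>j. j < m \<Longrightarrow> n j > 0"
    and i_lt: "i < m"
    and \<alpha>_sum: "(\<Sum>j<m. \<alpha> j) = 1"
  shows
    "let \<Omega> = sample_pmf m n P;
         ghat = (\<lambda>j \<omega>. emp_classifier PX f (emp_dist (n j) (\<omega> j)));
         g = (\<lambda>j y. measure_pmf.expectation \<Omega> (\<lambda>\<omega>. ghat j \<omega> y));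
         gstar = (\<lambda>\<omega> y. \<Sum>j<m. \<alpha> j *\<^sub>R ghat j \<omega> y);
         R = measure_pmf.expectation \<Omega> (\<lambda>\<omega>. chi2 PX (pmf (P i)) (QPX PX f (gstar \<omega>)));
         V = (\<lambda>j. real (n j) * measure_pmf.expectation \<Omega>
                      (\<lambda>\<omega>. chi2 PX (QPX PX f (ghat j \<omega>)) (QPX PX f (g j))))
     in R = chi2 PX (QPX PX f (g i)) (\<lambda>xy. \<Sum>j<m. \<alpha> j * QPX PX f (g j) xy)
            + (\<Sum>j<m. (\<alpha> j)^2 / real (n j) * V j)
            + chi2 PX (pmf (P i)) (QPX PX f (g i))"
proof -
  define \<Omega> where "\<Omega> = sample_pmf m n P"
  define ghat :: "nat \<Rightarrow> (nat \<Rightarrow> nat \<Rightarrow> 'x \<times> 'y) \<Rightarrow> 'y \<Rightarrow> real^'d"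
    where "ghat = (\<lambda>j \<omega>. emp_classifier PX f (emp_dist (n j) (\<omega> j)))"
  define g where "g = (\<lambda>j y. measure_pmf.expectation \<Omega> (\<lambda>\<omega>. ghat j \<omega> y))"
  have fin: "finite (set_pmf \<Omega>)"
    unfolding \<Omega>_def by (rule finite_set_sample_pmf)
  have invertible: "invertible (feature_cov PX f)"
    using A3 unfolding feature_cov_def .
  have g_i: "g i = lsq_classifier PX f (pmf (P i))"
    using fin expectation_emp_dist_sample_pmf[of i m n P, OF i_lt n_pos[OF i_lt]]
    by (simp add: g_def ghat_def \<Omega>_def emp_classifier_eq_lsq_classifier[OF PX_pos A2 invertible]
        expectation_lsq_classifier)
  have QPX_mean: "measure_pmf.expectation \<Omega> (\<lambda>\<omega>. QPX PX f (ghat j \<omega>) z) = QPX PX f (g j) z" for j z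
    using expectation_QPX[OF fin] unfolding g_def by (cases z) simp
  have uncorrelated: "measure_pmf.expectation \<Omega>
      (\<lambda>\<omega>. (QPX PX f (ghat j \<omega>) z - QPX PX f (g j) z) * (QPX PX f (ghat k \<omega>) z - QPX PX f (g k) z)) = 0"
    if "j < m" "k < m" "j \<noteq> k" for j k z
    using expectation_sample_pmf_centered_mult[OF that, of n P
        "\<lambda>w. QPX PX f (emp_classifier PX f (emp_dist (n j) w)) z" "QPX PX f (g j) z"
        "\<lambda>w. QPX PX f (emp_classifier PX f (emp_dist (n k) w)) z" "QPX PX f (g k) z"]
      QPX_mean[of j z] QPX_mean[of k z]
    by (simp add: \<Omega>_def ghat_def)
  have n_nonzero: "n j \<noteq> 0" if "j < m" for j
    using n_pos[OF that] by simp
  have "measure_pmf.expectation \<Omega> (\<lambda>\<omega>. chi2 PX (pmf (P i)) (QPX PX f (\<lambda>y. \<Sum>j<m. \<alpha> j *\<^sub>R ghat j \<omega> y)))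
      = chi2 PX (pmf (P i)) (QPX PX f (g i))
        + measure_pmf.expectation \<Omega> (\<lambda>\<omega>. chi2 PX (QPX PX f (g i)) (\<lambda>z. \<Sum>j<m. \<alpha> j * QPX PX f (ghat j \<omega>) z))"
    unfolding g_i chi2_QPX_affine_pythagoras[OF PX_pos A2 invertible \<alpha>_sum]
    by (simp add: integrable_measure_pmf_finite[OF fin])
  also have "\<dots> = chi2 PX (pmf (P i)) (QPX PX f (g i))
        + chi2 PX (QPX PX f (g i)) (\<lambda>z. \<Sum>j<m. \<alpha> j * QPX PX f (g j) z)
        + (\<Sum>j<m. (\<alpha> j)\<^sup>2 * measure_pmf.expectation \<Omega> (\<lambda>\<omega>. chi2 PX (QPX PX f (ghat j \<omega>)) (QPX PX f (g j))))"
    by (subst expectation_chi2_sum_centered[OF fin finite_lessThan]) (auto simp: QPX_mean uncorrelated)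
  finally show ?thesis
    unfolding Let_def \<Omega>_def[symmetric] by (simp add: ghat_def g_def n_nonzero add_ac)
qed

end
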